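(* Let $G$ be a finite simple graph of order $n$ having no connected component of order less than $3$, and let $\mathcal{G}$ be an arbitrary Abelian group of order at least $2n$. Then there exists a labeling $f\colon E(G)\to\mathcal{G}$ such that $f(e)\neq 0$ for every edge $e$, the weighted degrees $w_f(v)$, $v\in V(G)$, are pairwise distinct, and $w_f(v)\neq 0$ for every vertex $v$.
   Context: For an Abelian group $\mathcal{G}$ (written additively, with identity $0$) and a labeling $f\colon E(G)\to\mathcal{G}$, the weighted degree (weight) of a vertex $v$ is $w_f(v)=\sum_{u\in N(v)} f(uv)$, the sum taken in $\mathcal{G}$. *)

theory Defs
  imports Main
begin

definition simple_graph :: "'v set \<Rightarrow> 'v set set \<Rightarrow> bool" where
  "simple_graph V E \<longleftrightarrow> finite V \<and>
     (\<forall>e\<in>E. \<exists>u v. e = {u, v} \<and> u \<noteq> v \<and> u \<in> V \<and> v \<in> V)"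

definition adj :: "'v set set \<Rightarrow> 'v \<Rightarrow> 'v \<Rightarrow> bool" where
  "adj E u v \<longleftrightarrow> u \<noteq> v \<and> {u, v} \<in> E"

definition neighbors :: "'v set set \<Rightarrow> 'v \<Rightarrow> 'v set" where
  "neighbors E v = {u. adj E v u}"

definition component :: "'v set set \<Rightarrow> 'v \<Rightarrow> 'v set" where
  "component E v = {u. (adj E)\<^sup>*\<^sup>* v u}"

definition weight :: "'v set set \<Rightarrow> ('v set \<Rightarrow> 'a::comm_monoid_add) \<Rightarrow> 'v \<Rightarrow> 'a" where
  "weight E f v = (\<Sum>u\<in>neighbors E v. f {u, v})"

end

theory Submission
  imports Defs
begin

text \<open>
  Induct on the number of vertices plus edges within the graphs having no component K1 or K2,
  which for simple graphs is a local degree condition. Every nonempty such graph contains an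
  edge whose deletion stays in the class, a leaf whose deletion does, or a component that is a
  path on three vertices. A labeling of the reduced graph extends: only the weights at the ends
  of a new edge change, each by its label g, so g must be nonzero and keep these weights away
  from 0 and from the at most n - 2 unchanged weights. Fewer than 2n values of g are excluded,
  and a group of order at least 2n has one left.
\<close>

section \<open>Neighbourhoods and weighted degrees\<close>

abbreviation degree :: "'v set set \<Rightarrow> 'v \<Rightarrow> nat" where
  "degree E v \<equiv> card (neighbors E v)"

lemma in_neighbors_iff: "u \<in> neighbors E v \<longleftrightarrow> u \<noteq> v \<and> {v, u} \<in> E"
  by (auto simp: neighbors_def adj_def)

lemma in_neighbors_sym: "u \<in> neighbors E v \<longleftrightarrow> v \<in> neighbors E u"
  by (auto simp: in_neighbors_iff insert_commute)

lemma edge_vertices: "simple_graph V E \<Longrightarrow> {u, v} \<in> E \<Longrightarrow> u \<in> V \<and> v \<in> V"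
  unfolding simple_graph_def by (auto simp: doubleton_eq_iff)

lemma neighbors_subset: "simple_graph V E \<Longrightarrow> neighbors E v \<subseteq> V"
  using edge_vertices by (fastforce simp: in_neighbors_iff)

lemma finite_neighbors: "simple_graph V E \<Longrightarrow> finite (neighbors E v)"
  using neighbors_subset finite_subset simple_graph_def by metis

lemma finite_edges:
  assumes "simple_graph V E"
  shows "finite E"
proof -
  have "E \<subseteq> Pow V" using assms by (auto simp: simple_graph_def)
  moreover have "finite V" using assms by (simp add: simple_graph_def)
  ultimately show ?thesis by (rule finite_subset[OF _ finite_Pow_iff[THEN iffD2]])
qed

lemma simple_graph_subset: "simple_graph V E \<Longrightarrow> E' \<subseteq> E \<Longrightarrow> simple_graph V E'"
  unfolding simple_graph_def by blast

lemma simple_graph_Diff_isolated: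
  assumes "simple_graph V E" and "\<And>x. x \<in> X \<Longrightarrow> neighbors E x = {}"
  shows "simple_graph (V - X) E"
  unfolding simple_graph_def
proof (intro conjI ballI)
  show "finite (V - X)" using assms(1) by (simp add: simple_graph_def)
  fix e assume "e \<in> E"
  then obtain u v where uv: "e = {u, v}" "u \<noteq> v" "u \<in> V" "v \<in> V"
    using assms(1) unfolding simple_graph_def by blast
  with \<open>e \<in> E\<close> have "v \<in> neighbors E u" "u \<in> neighbors E v"
    by (auto simp: in_neighbors_iff insert_commute)
  then have "u \<notin> X" "v \<notin> X" using assms(2) by auto
  with uv show "\<exists>u v. e = {u, v} \<and> u \<noteq> v \<and> u \<in> V - X \<and> v \<in> V - X" by blast
qed

lemma neighbors_Diff_edge:
  assumes "u \<noteq> v"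
  shows "neighbors (E - {{u, v}}) x =
    (if x = u then neighbors E x - {v} else if x = v then neighbors E x - {u} else neighbors E x)"
  using assms by (auto simp: in_neighbors_iff doubleton_eq_iff)

lemma neighbors_Diff_P3:
  assumes "neighbors E a = {c}" "neighbors E b = {c}" "neighbors E c = {a, b}"
  shows "neighbors (E - {{a, c}, {b, c}}) z = (if z \<in> {a, b, c} then {} else neighbors E z)"
proof -
  have "y \<notin> neighbors (E - {{a, c}, {b, c}}) z" if "z \<in> {a, b, c}" for y
  proof
    assume "y \<in> neighbors (E - {{a, c}, {b, c}}) z"
    then have "y \<in> neighbors E z" "{z, y} \<noteq> {a, c}" "{z, y} \<noteq> {b, c}"
      by (auto simp: in_neighbors_iff)
    then show False using assms that by (auto simp: doubleton_eq_iff)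
  qed
  moreover have "neighbors (E - {{a, c}, {b, c}}) z = neighbors E z" if "z \<notin> {a, b, c}"
    using that by (auto simp: in_neighbors_iff)
  ultimately show ?thesis by auto
qed

lemma neighbors_insert_edge:
  assumes "u \<noteq> v"
  shows "neighbors (insert {u, v} E) x =
    (if x = u then insert v (neighbors E x) else if x = v then insert u (neighbors E x)
     else neighbors E x)"
  using assms by (auto simp: in_neighbors_iff doubleton_eq_iff)

lemma weight_insert_edge:
  assumes "{u, v} \<notin> E" "u \<noteq> v" "finite (neighbors E x)"
  shows "weight (insert {u, v} E) (f({u, v} := g)) x
           = weight E f x + (if x \<in> {u, v} then g else 0)"
proof -
  have old: "(\<Sum>y\<in>neighbors E x. (f({u, v} := g)) {y, x}) = weight E f x"
    unfolding weight_def
  proof (rule sum.cong)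
    fix y assume "y \<in> neighbors E x"
    then have "{y, x} \<noteq> {u, v}" using assms(1) by (auto simp: in_neighbors_iff insert_commute)
    then show "(f({u, v} := g)) {y, x} = f {y, x}" by simp
  qed simp
  have "v \<notin> neighbors E u" "u \<notin> neighbors E v"
    using assms(1) by (auto simp: in_neighbors_iff insert_commute)
  then show ?thesis
    using assms old by (auto simp: weight_def neighbors_insert_edge insert_commute add.commute)
qed

lemma weight_fun_upd_edge:
  assumes "simple_graph V E" "{u, v} \<in> E" "u \<noteq> v"
  shows "weight E (f({u, v} := g)) x = weight (E - {{u, v}}) f x + (if x \<in> {u, v} then g else 0)"
proof -
  have "finite (neighbors (E - {{u, v}}) x)"
    using finite_neighbors[OF simple_graph_subset[OF assms(1) Diff_subset]] .
  then have "weight (insert {u, v} (E - {{u, v}})) (f({u, v} := g)) x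
               = weight (E - {{u, v}}) f x + (if x \<in> {u, v} then g else 0)"
    using assms(3) by (intro weight_insert_edge) auto
  moreover have "insert {u, v} (E - {{u, v}}) = E" using assms(2) by blast
  ultimately show ?thesis by simp
qed

lemma weight_fun_upd_two_edges:
  assumes sg: "simple_graph V E" and "{a, c} \<in> E" "{b, c} \<in> E" "a \<noteq> b" "a \<noteq> c" "b \<noteq> c"
  shows "weight E (f({a, c} := x, {b, c} := y)) z = weight (E - {{a, c}, {b, c}}) f z
           + (if z \<in> {a, c} then x else 0) + (if z \<in> {b, c} then y else 0)"
proof -
  have sg': "simple_graph V (E - {{b, c}})" using sg by (rule simple_graph_subset) blast
  have ac: "{a, c} \<in> E - {{b, c}}" using assms(2,4) by (auto simp: doubleton_eq_iff)
  have "E - {{b, c}} - {{a, c}} = E - {{a, c}, {b, c}}" by blast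
  then show ?thesis
    using weight_fun_upd_edge[OF sg assms(3,6), of "f({a, c} := x)" y z]
      weight_fun_upd_edge[OF sg' ac assms(5), of f x z] by simp
qed

section \<open>Extending labelings\<close>

definition nonzero_irregular :: "'v set \<Rightarrow> 'v set set \<Rightarrow> ('v set \<Rightarrow> 'a::ab_group_add) \<Rightarrow> bool" where
  "nonzero_irregular V E f \<longleftrightarrow>
     (\<forall>e\<in>E. f e \<noteq> 0) \<and> inj_on (weight E f) V \<and> (\<forall>v\<in>V. weight E f v \<noteq> 0)"

lemma ex_avoiding_translates:
  fixes X C F :: "'a::ab_group_add set"
  assumes "finite X" "finite C" "finite F"
    and "infinite (UNIV :: 'a set) \<or> card X + card C * card F < card (UNIV :: 'a set)"
  obtains g where "g \<notin> X" "\<And>c. c \<in> C \<Longrightarrow> c + g \<notin> F"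
proof -
  define S where "S = X \<union> (\<Union>c\<in>C. (\<lambda>y. y - c) ` F)"
  have "finite S" using assms(1-3) by (simp add: S_def)
  have "card (\<Union>c\<in>C. (\<lambda>y. y - c) ` F) \<le> (\<Sum>c\<in>C. card ((\<lambda>y. y - c) ` F))"
    by (rule card_UN_le[OF assms(2)])
  also have "\<dots> \<le> card C * card F"
    using sum_bounded_above[of C _ "card F"] card_image_le[OF assms(3)] by (metis of_nat_id)
  finally have "card S \<le> card X + card C * card F"
    unfolding S_def by (meson card_Un_le add_le_mono order_trans le_refl)
  with assms(4) \<open>finite S\<close> have "S \<noteq> UNIV" by auto
  then obtain g where "g \<notin> S" by blast
  moreover have "g \<in> (\<lambda>y. y - c) ` F" if "c + g \<in> F" for c
    using rev_image_eqI[OF that, of g] by simp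
  ultimately show thesis by (intro that) (auto simp: S_def)
qed

lemma ex_label_avoiding:
  fixes w :: "'v \<Rightarrow> 'a::ab_group_add"
  assumes "infinite (UNIV :: 'a set) \<or> 2 * n \<le> card (UNIV :: 'a set)"
    and "finite A" "card A + 2 \<le> n" "finite X" "card X \<le> 1" "finite C" "card C \<le> 2"
  obtains g where "g \<notin> X" "\<And>c. c \<in> C \<Longrightarrow> c + g \<notin> insert 0 (w ` A)"
proof (rule ex_avoiding_translates)
  have "card (insert 0 (w ` A)) \<le> Suc (card A)"
    by (metis assms(2) card_image_le card_insert_le_m1 diff_Suc_1 le_SucI zero_less_Suc)
  then have "card C * card (insert 0 (w ` A)) \<le> 2 * Suc (card A)"
    using assms(7) by (rule mult_le_mono[rotated])
  then have "card X + card C * card (insert 0 (w ` A)) < 2 * n"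
    using assms(3,5) by simp
  then show "infinite (UNIV :: 'a set) \<or> card X + card C * card (insert 0 (w ` A)) < card (UNIV :: 'a set)"
    using assms(1) by auto
qed (use assms in auto)

lemma inj_on_nonzero_extend:
  assumes "inj_on w0 A0" "\<forall>x\<in>A0. w0 x \<noteq> 0" "A \<subseteq> A0" "\<forall>x\<in>A. w x = w0 x"
    and "inj_on w B" "\<forall>x\<in>B. w x \<notin> insert 0 (w0 ` A)"
  shows "inj_on w (A \<union> B)" "\<forall>x\<in>A \<union> B. w x \<noteq> 0"
proof -
  have "inj_on w A" using assms(1,3,4) inj_on_cong inj_on_subset by metis
  moreover have "w ` A = w0 ` A" using assms(4) by simp
  ultimately show "inj_on w (A \<union> B)" using assms(5,6) by (auto simp: inj_on_Un) (metis imageI)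
  show "\<forall>x\<in>A \<union> B. w x \<noteq> 0" using assms(2-4,6) by auto
qed

lemma nonzero_irregular_extend:
  assumes "nonzero_irregular V0 E0 f0" "A \<subseteq> V0" "\<forall>z\<in>A. weight E f z = weight E0 f0 z"
    and "inj_on (weight E f) B" "\<forall>z\<in>B. weight E f z \<notin> insert 0 (weight E0 f0 ` A)"
    and "\<forall>e\<in>E. f e \<noteq> 0"
  shows "nonzero_irregular (A \<union> B) E f"
proof -
  have "inj_on (weight E0 f0) V0" "\<forall>z\<in>V0. weight E0 f0 z \<noteq> 0"
    using assms(1) by (simp_all add: nonzero_irregular_def)
  from inj_on_nonzero_extend[OF this assms(2-5)] assms(6) show ?thesis
    by (simp add: nonzero_irregular_def)
qed

lemma nonzero_irregular_insert_edge:
  fixes f0 :: "'v set \<Rightarrow> 'a::ab_group_add"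
  assumes sg: "simple_graph V E" and e: "{u, v} \<in> E" "u \<noteq> v"
    and f0: "nonzero_irregular V (E - {{u, v}}) f0"
    and order: "infinite (UNIV :: 'a set) \<or> 2 * card V \<le> card (UNIV :: 'a set)"
  shows "\<exists>f :: 'v set \<Rightarrow> 'a. nonzero_irregular V E f"
proof -
  define w where "w = weight (E - {{u, v}}) f0"
  define A where "A = V - {u, v}"
  have "finite V" using sg by (simp add: simple_graph_def)
  have uv: "u \<in> V" "v \<in> V" using edge_vertices[OF sg e(1)] by simp_all
  have "card A + 2 = card V"
    using card_mono[OF \<open>finite V\<close>, of "{u, v}"] uv e(2) \<open>finite V\<close>
    by (simp add: A_def card_Diff_subset)
  moreover have "card {w u, w v} \<le> 2" by (simp add: card_insert_if)
  ultimately obtain g where "g \<notin> {0}" "\<And>c. c \<in> {w u, w v} \<Longrightarrow> c + g \<notin> insert 0 (w ` A)"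
    using ex_label_avoiding[OF order, of A "{0}" "{w u, w v}" w] \<open>finite V\<close>
    by (auto simp: A_def)
  then have g: "g \<noteq> 0" "w u + g \<notin> insert 0 (w ` A)" "w v + g \<notin> insert 0 (w ` A)" by auto
  define f where "f = f0({u, v} := g)"
  have W: "weight E f z = w z + (if z \<in> {u, v} then g else 0)" for z
    unfolding f_def w_def using weight_fun_upd_edge[OF sg e] .
  have "w u \<noteq> w v" using f0 uv e(2) by (auto simp: nonzero_irregular_def w_def dest: inj_onD)
  then have inj: "inj_on (weight E f) {u, v}" using e(2) by (simp add: W)
  have sub: "A \<subseteq> V" and agree: "\<forall>z\<in>A. weight E f z = w z" by (auto simp: W A_def)
  have avoid: "\<forall>z\<in>{u, v}. weight E f z \<notin> insert 0 (w ` A)" using g by (simp add: W)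
  have labels: "\<forall>e\<in>E. f e \<noteq> 0" using f0 g(1) by (simp add: nonzero_irregular_def f_def)
  have "nonzero_irregular (A \<union> {u, v}) E f"
    using nonzero_irregular_extend[OF f0 sub, folded w_def, OF agree inj avoid labels] .
  moreover have "A \<union> {u, v} = V" using uv by (auto simp: A_def)
  ultimately show ?thesis by auto
qed

lemma nonzero_irregular_insert_leaf:
  fixes f0 :: "'v set \<Rightarrow> 'a::ab_group_add"
  assumes sg: "simple_graph V E" and l: "l \<in> V" "neighbors E l = {p}"
    and f0: "nonzero_irregular (V - {l}) (E - {{l, p}}) f0"
    and order: "infinite (UNIV :: 'a set) \<or> 2 * card V \<le> card (UNIV :: 'a set)"
  shows "\<exists>f :: 'v set \<Rightarrow> 'a. nonzero_irregular V E f"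
proof -
  define w where "w = weight (E - {{l, p}}) f0"
  define A where "A = V - {l, p}"
  have e: "{l, p} \<in> E" "l \<noteq> p" using l(2) by (auto simp: in_neighbors_iff)
  have "finite V" using sg by (simp add: simple_graph_def)
  have "p \<in> V" using edge_vertices[OF sg e(1)] by simp
  have "w l = 0" using l(2) e(2) by (simp add: w_def weight_def neighbors_Diff_edge)
  have "card A + 2 = card V"
    using card_mono[OF \<open>finite V\<close>, of "{l, p}"] l(1) \<open>p \<in> V\<close> e(2) \<open>finite V\<close>
    by (simp add: A_def card_Diff_subset)
  moreover have "card {0, w p} \<le> 2" by (simp add: card_insert_if)
  ultimately obtain g where "\<And>c. c \<in> {0, w p} \<Longrightarrow> c + g \<notin> insert 0 (w ` A)"
    using ex_label_avoiding[OF order, of A "{}" "{0, w p}" w] \<open>finite V\<close>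
    by (auto simp: A_def)
  then have g: "g \<notin> insert 0 (w ` A)" "w p + g \<notin> insert 0 (w ` A)"
    by (metis add_0 insertI1, blast)
  define f where "f = f0({l, p} := g)"
  have W: "weight E f z = w z + (if z \<in> {l, p} then g else 0)" for z
    unfolding f_def w_def using weight_fun_upd_edge[OF sg e] .
  have "w p \<noteq> 0" using f0 \<open>p \<in> V\<close> e(2) by (simp add: nonzero_irregular_def w_def)
  then have inj: "inj_on (weight E f) {l, p}" using \<open>w l = 0\<close> e(2) by (simp add: W)
  have sub: "A \<subseteq> V - {l}" and agree: "\<forall>z\<in>A. weight E f z = w z" by (auto simp: W A_def)
  have avoid: "\<forall>z\<in>{l, p}. weight E f z \<notin> insert 0 (w ` A)" using g \<open>w l = 0\<close> by (simp add: W)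
  have labels: "\<forall>e\<in>E. f e \<noteq> 0" using f0 g(1) by (simp add: nonzero_irregular_def f_def)
  have "nonzero_irregular (A \<union> {l, p}) E f"
    using nonzero_irregular_extend[OF f0 sub, folded w_def, OF agree inj avoid labels] .
  moreover have "A \<union> {l, p} = V" using l(1) \<open>p \<in> V\<close> by (auto simp: A_def)
  ultimately show ?thesis by auto
qed

lemma nonzero_irregular_insert_P3:
  fixes f0 :: "'v set \<Rightarrow> 'a::ab_group_add"
  assumes sg: "simple_graph V E" and abc: "a \<in> V" "b \<in> V" "a \<noteq> b"
    "neighbors E a = {c}" "neighbors E b = {c}" "neighbors E c = {a, b}"
    and f0: "nonzero_irregular (V - {a, b, c}) (E - {{a, c}, {b, c}}) f0"
    and order: "infinite (UNIV :: 'a set) \<or> 2 * card V \<le> card (UNIV :: 'a set)"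
  shows "\<exists>f :: 'v set \<Rightarrow> 'a. nonzero_irregular V E f"
proof -
  define w where "w = weight (E - {{a, c}, {b, c}}) f0"
  define A where "A = V - {a, b, c}"
  have "c \<in> neighbors E a" "c \<in> neighbors E b" using abc(4,5) by simp_all
  then have ac: "{a, c} \<in> E" "a \<noteq> c" and bc: "{b, c} \<in> E" "b \<noteq> c"
    by (auto simp: in_neighbors_iff)
  have "finite V" using sg by (simp add: simple_graph_def)
  have "c \<in> V" using edge_vertices[OF sg bc(1)] by simp
  have "w a = 0" "w b = 0" "w c = 0"
    using neighbors_Diff_P3[OF abc(4-6)] by (simp_all add: w_def weight_def)
  have "card A + 3 = card V"
    using card_mono[OF \<open>finite V\<close>, of "{a, b, c}"] abc(1-3) \<open>c \<in> V\<close> ac(2) bc(2) \<open>finite V\<close>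
    by (simp add: A_def card_Diff_subset)
  then obtain x where x: "x \<notin> insert 0 (w ` A)"
    using ex_label_avoiding[OF order, of A "{}" "{0}" w] \<open>finite V\<close>
    by (auto simp: A_def)
  have "card {0, x} \<le> 2" by (simp add: card_insert_if)
  then obtain y where "y \<notin> {x}" "\<And>c. c \<in> {0, x} \<Longrightarrow> c + y \<notin> insert 0 (w ` A)"
    using ex_label_avoiding[OF order, of A "{x}" "{0, x}" w] \<open>finite V\<close> \<open>card A + 3 = card V\<close>
    by (auto simp: A_def)
  then have y: "y \<notin> insert 0 (w ` A)" "x + y \<notin> insert 0 (w ` A)" "x \<noteq> y"
    by (metis add_0 insertI1, blast, blast)
  define f where "f = f0({a, c} := x, {b, c} := y)"
  have W: "weight E f z = w z + (if z \<in> {a, c} then x else 0) + (if z \<in> {b, c} then y else 0)" for z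
    unfolding f_def w_def using weight_fun_upd_two_edges[OF sg ac(1) bc(1) abc(3) ac(2) bc(2)] .
  have Wabc: "weight E f a = x" "weight E f b = y" "weight E f c = x + y"
    using \<open>w a = 0\<close> \<open>w b = 0\<close> \<open>w c = 0\<close> abc(3) ac(2) bc(2) by (simp_all add: W)
  moreover have "x \<noteq> 0" "y \<noteq> 0" using x y by auto
  ultimately have inj: "inj_on (weight E f) {a, b, c}" using y(3) by (auto simp: inj_on_insert)
  have sub: "A \<subseteq> V - {a, b, c}" and agree: "\<forall>z\<in>A. weight E f z = w z"
    by (simp_all add: W A_def)
  have avoid: "\<forall>z\<in>{a, b, c}. weight E f z \<notin> insert 0 (w ` A)" using Wabc x y by simp
  have labels: "\<forall>e\<in>E. f e \<noteq> 0"
    using f0 \<open>x \<noteq> 0\<close> \<open>y \<noteq> 0\<close> by (simp add: nonzero_irregular_def f_def)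
  have "nonzero_irregular (A \<union> {a, b, c}) E f"
    using nonzero_irregular_extend[OF f0 sub, folded w_def, OF agree inj avoid labels] .
  moreover have "A \<union> {a, b, c} = V" using abc(1,2) \<open>c \<in> V\<close> by (auto simp: A_def)
  ultimately show ?thesis by auto
qed

section \<open>Graphs without components K1 and K2\<close>

definition not_in_K1_K2 :: "'v set set \<Rightarrow> 'v \<Rightarrow> bool" where
  "not_in_K1_K2 E v \<longleftrightarrow>
     neighbors E v \<noteq> {} \<and> (\<forall>u\<in>neighbors E v. 2 \<le> degree E u \<or> 2 \<le> degree E v)"

text \<open>Deleting the edge xy leaves x neither isolated nor in a K2 component.\<close>
definition detachable :: "'v set set \<Rightarrow> 'v \<Rightarrow> 'v \<Rightarrow> bool" where
  "detachable E x y \<longleftrightarrow>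
     3 \<le> degree E x \<or> (degree E x = 2 \<and> (\<forall>q\<in>neighbors E x - {y}. 2 \<le> degree E q))"

lemma eq_singleton_if_card_le_1: "finite A \<Longrightarrow> card A \<le> 1 \<Longrightarrow> x \<in> A \<Longrightarrow> A = {x}"
  using card_le_Suc0_iff_eq by fastforce

lemma eq_pair_if_card_2: "card A = 2 \<Longrightarrow> x \<in> A \<Longrightarrow> y \<in> A \<Longrightarrow> x \<noteq> y \<Longrightarrow> A = {x, y}"
  by (auto simp: card_2_iff)

lemma component_if_neighbors_empty:
  assumes "neighbors E v = {}"
  shows "component E v = {v}"
proof -
  have "u = v" if "(adj E)\<^sup>*\<^sup>* v u" for u
    using that by (rule converse_rtranclpE) (use assms in \<open>auto simp: neighbors_def\<close>)
  then show ?thesis by (auto simp: component_def)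
qed

lemma component_subset_if_K2:
  assumes "neighbors E v = {u}" "neighbors E u = {v}"
  shows "component E v \<subseteq> {u, v}"
proof
  fix x assume "x \<in> component E v"
  then have "(adj E)\<^sup>*\<^sup>* v x" by (simp add: component_def)
  then show "x \<in> {u, v}"
  proof (induction rule: rtranclp_induct)
    case (step y z)
    then have "z \<in> neighbors E y" by (simp add: neighbors_def)
    with step assms show ?case by auto
  qed auto
qed

lemma not_in_K1_K2_if_card_component:
  assumes sg: "simple_graph V E" and "3 \<le> card (component E v)"
  shows "not_in_K1_K2 E v"
  unfolding not_in_K1_K2_def
proof (intro conjI ballI)
  show "neighbors E v \<noteq> {}" using assms(2) component_if_neighbors_empty by fastforce
  fix u assume u: "u \<in> neighbors E v"
  show "2 \<le> degree E u \<or> 2 \<le> degree E v"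
  proof (rule ccontr)
    assume "\<not> ?thesis"
    then have "degree E u \<le> 1" "degree E v \<le> 1" by simp_all
    moreover have "v \<in> neighbors E u" using u in_neighbors_sym by metis
    ultimately have "neighbors E u = {v}" "neighbors E v = {u}"
      using u by (simp_all add: eq_singleton_if_card_le_1 finite_neighbors[OF sg])
    then have "card (component E v) \<le> card {u, v}"
      by (intro card_mono component_subset_if_K2) auto
    also have "\<dots> \<le> 2" by (simp add: card_insert_if)
    finally show False using assms(2) by simp
  qed
qed

lemma detachable_neighbor_degree:
  "detachable E y y' \<Longrightarrow> z \<in> neighbors E y - {y'} \<Longrightarrow> 3 \<le> degree E y \<or> 2 \<le> degree E z"
  by (auto simp: detachable_def)

lemma not_in_K1_K2_Diff_edge:
  assumes sg: "simple_graph V E" and e: "{u, v} \<in> E" "u \<noteq> v"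
    and x: "not_in_K1_K2 E x" "x \<noteq> v"
    and u: "detachable E u v" and v: "detachable E v u \<or> neighbors E v = {u}"
  shows "not_in_K1_K2 (E - {{u, v}}) x"
proof -
  let ?E' = "E - {{u, v}}"
  have "v \<in> neighbors E u" "u \<in> neighbors E v" using e by (auto simp: in_neighbors_iff insert_commute)
  then have deg_uv: "degree ?E' u = degree E u - 1" "degree ?E' v = degree E v - 1"
    using e(2) finite_neighbors[OF sg] by (simp_all add: neighbors_Diff_edge)
  have deg_other: "degree ?E' z = degree E z" if "z \<noteq> u" "z \<noteq> v" for z
    using that e(2) by (simp add: neighbors_Diff_edge)
  have "2 \<le> degree E u" using u by (auto simp: detachable_def)
  show ?thesis
  proof (cases "x = u")
    case True
    then have N': "neighbors ?E' x = neighbors E u - {v}" using e(2) by (simp add: neighbors_Diff_edge)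
    have "neighbors E u - {v} \<noteq> {}"
      using \<open>2 \<le> degree E u\<close> deg_uv(1) by (auto simp: N'[symmetric] True)
    moreover have "2 \<le> degree ?E' y \<or> 2 \<le> degree ?E' u" if "y \<in> neighbors E u - {v}" for y
    proof -
      have "y \<noteq> u" using that by (simp add: in_neighbors_iff)
      then show ?thesis
        using detachable_neighbor_degree[OF u that] deg_uv(1) deg_other[of y] that by auto
    qed
    ultimately show ?thesis using True N' by (simp add: not_in_K1_K2_def)
  next
    case False
    then have N': "neighbors ?E' x = neighbors E x" using e(2) x(2) by (simp add: neighbors_Diff_edge)
    have "2 \<le> degree ?E' y \<or> 2 \<le> degree E x" if y: "y \<in> neighbors E x" for y
    proof -
      have xy: "x \<in> neighbors E y" using y in_neighbors_sym by metis
      have "2 \<le> degree E y \<or> 2 \<le> degree E x" using x(1) y by (auto simp: not_in_K1_K2_def)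
      moreover have "3 \<le> degree E u \<or> 2 \<le> degree E x" if "y = u"
        using detachable_neighbor_degree[OF u] xy x(2) that by blast
      moreover have "3 \<le> degree E v \<or> 2 \<le> degree E x" if "y = v"
        using v detachable_neighbor_degree[of E v u x] xy False that by blast
      ultimately show ?thesis using deg_uv deg_other[of y] by fastforce
    qed
    then show ?thesis
      using x(1) N' deg_other[OF False x(2)] by (simp add: not_in_K1_K2_def)
  qed
qed

lemma not_in_K1_K2_remove_edge:
  assumes sg: "simple_graph V E" and e: "{u, v} \<in> E" "u \<noteq> v"
    and free: "\<forall>x\<in>V. not_in_K1_K2 E x" and "detachable E u v" "detachable E v u"
  shows "\<forall>x\<in>V. not_in_K1_K2 (E - {{u, v}}) x"
proof
  fix x assume "x \<in> V"
  show "not_in_K1_K2 (E - {{u, v}}) x"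
  proof (cases "x = v")
    case True
    have "{v, u} \<in> E" using e(1) by (simp add: insert_commute)
    then show ?thesis
      using not_in_K1_K2_Diff_edge[OF sg _ e(2)[symmetric], of x] free \<open>x \<in> V\<close> True e(2) assms(5,6)
      by (simp add: insert_commute)
  next
    case False
    then show ?thesis using not_in_K1_K2_Diff_edge[OF sg e] free \<open>x \<in> V\<close> assms(5,6) by blast
  qed
qed

lemma not_in_K1_K2_remove_leaf:
  assumes sg: "simple_graph V E" and l: "neighbors E l = {p}"
    and free: "\<forall>x\<in>V. not_in_K1_K2 E x" and "detachable E p l"
  shows "simple_graph (V - {l}) (E - {{l, p}})" "\<forall>x\<in>V - {l}. not_in_K1_K2 (E - {{l, p}}) x"
proof -
  have e: "{p, l} \<in> E" "p \<noteq> l" using l by (auto simp: in_neighbors_iff insert_commute)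
  have "neighbors (E - {{l, p}}) l = {}" using l e(2) by (simp add: neighbors_Diff_edge)
  then show "simple_graph (V - {l}) (E - {{l, p}})"
    by (intro simple_graph_Diff_isolated[OF simple_graph_subset[OF sg Diff_subset]]) simp
  show "\<forall>x\<in>V - {l}. not_in_K1_K2 (E - {{l, p}}) x"
    using not_in_K1_K2_Diff_edge[OF sg e] free assms(4) l by (simp add: insert_commute)
qed

lemma not_in_K1_K2_remove_P3:
  assumes sg: "simple_graph V E" and P3: "neighbors E a = {c}" "neighbors E b = {c}" "neighbors E c = {a, b}"
    and free: "\<forall>x\<in>V. not_in_K1_K2 E x"
  shows "simple_graph (V - {a, b, c}) (E - {{a, c}, {b, c}})"
    "\<forall>x\<in>V - {a, b, c}. not_in_K1_K2 (E - {{a, c}, {b, c}}) x"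
proof -
  let ?E' = "E - {{a, c}, {b, c}}"
  note N' = neighbors_Diff_P3[OF P3]
  show "simple_graph (V - {a, b, c}) ?E'"
    by (intro simple_graph_Diff_isolated[OF simple_graph_subset[OF sg Diff_subset]]) (simp add: N')
  have "y \<notin> {a, b, c}" if "y \<in> neighbors E x" "x \<notin> {a, b, c}" for x y
  proof -
    have "x \<in> neighbors E y" using that(1) in_neighbors_sym by metis
    then show ?thesis using that(2) P3 by auto
  qed
  then show "\<forall>x\<in>V - {a, b, c}. not_in_K1_K2 ?E' x"
    using free N' by (auto simp: not_in_K1_K2_def)
qed

lemma degree_ge_1_if_not_in_K1_K2:
  "simple_graph V E \<Longrightarrow> not_in_K1_K2 E x \<Longrightarrow> 1 \<le> degree E x"
  using finite_neighbors by (fastforce simp: not_in_K1_K2_def Suc_le_eq card_gt_0_iff)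

lemma reducible_at_high_degree:
  assumes sg: "simple_graph V E" and free: "\<forall>x\<in>V. not_in_K1_K2 E x"
    and x: "x \<in> V" "3 \<le> degree E x"
  obtains (edge) u v where "{u, v} \<in> E" "u \<noteq> v" "detachable E u v" "detachable E v u"
    | (leaf) l p where "l \<in> V" "neighbors E l = {p}" "detachable E p l"
proof -
  obtain u where u: "u \<in> neighbors E x" using free x(1) by (auto simp: not_in_K1_K2_def)
  have xu: "x \<in> neighbors E u" "u \<in> V" "{x, u} \<in> E" "x \<noteq> u"
    using u neighbors_subset[OF sg, of x] by (auto simp: in_neighbors_iff insert_commute)
  have "detachable E x y" for y using x(2) by (simp add: detachable_def)
  have "1 \<le> degree E u" using degree_ge_1_if_not_in_K1_K2[OF sg] free xu(2) by blast
  consider "degree E u = 1" | "detachable E u x" | "degree E u = 2" "\<not> detachable E u x"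
    using \<open>1 \<le> degree E u\<close>
    by (cases "degree E u = 1"; cases "degree E u = 2") (auto simp: detachable_def)
  then show thesis
  proof cases
    case 1
    then have "neighbors E u = {x}"
      using xu(1) finite_neighbors[OF sg] by (simp add: eq_singleton_if_card_le_1)
    then show thesis using leaf xu(2) \<open>\<And>y. detachable E x y\<close> by blast
  next
    case 2
    then show thesis using edge xu(3,4) \<open>\<And>y. detachable E x y\<close> by blast
  next
    case 3
    then have "\<not> (\<forall>q\<in>neighbors E u - {x}. 2 \<le> degree E q)" by (simp add: detachable_def)
    then obtain q where q: "q \<in> neighbors E u - {x}" "degree E q < 2" by (auto simp: not_le)
    have "u \<in> neighbors E q" "q \<in> V"
      using q(1) in_neighbors_sym[of q E u] neighbors_subset[OF sg, of u] by auto
    moreover from this have "1 \<le> degree E q" using degree_ge_1_if_not_in_K1_K2[OF sg] free by blast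
    ultimately have "neighbors E q = {u}"
      using q(2) finite_neighbors[OF sg] by (simp add: eq_singleton_if_card_le_1)
    moreover have "neighbors E u = {x, q}" using eq_pair_if_card_2 3(1) xu(1) q(1) by fastforce
    then have "detachable E u q" using 3(1) x(2) q(1) by (auto simp: detachable_def)
    ultimately show thesis using leaf \<open>q \<in> V\<close> by blast
  qed
qed

lemma reducible_at_leaf:
  assumes sg: "simple_graph V E" and free: "\<forall>x\<in>V. not_in_K1_K2 E x"
    and x: "x \<in> V" "degree E x = 1" and deg_le_2: "\<forall>z\<in>V. degree E z \<le> 2"
  obtains (leaf) l p where "l \<in> V" "neighbors E l = {p}" "detachable E p l"
    | (P3) a b c where "a \<in> V" "b \<in> V" "a \<noteq> b"
      "neighbors E a = {c}" "neighbors E b = {c}" "neighbors E c = {a, b}"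
proof -
  obtain p where p: "neighbors E x = {p}" using x(2) card_1_singletonE by blast
  have "x \<in> neighbors E p" "p \<in> V"
    using p in_neighbors_sym[of p E x] neighbors_subset[OF sg, of x] by auto
  have "2 \<le> degree E p" using free x p by (auto simp: not_in_K1_K2_def)
  then have "degree E p = 2" using deg_le_2 \<open>p \<in> V\<close> by fastforce
  then have "card (neighbors E p - {x}) = 1"
    using card_Diff_singleton[OF \<open>x \<in> neighbors E p\<close>] by simp
  then have "neighbors E p - {x} \<noteq> {}" by (metis card.empty zero_neq_one)
  then obtain q where q: "q \<in> neighbors E p" "q \<noteq> x" by blast
  have Np: "neighbors E p = {x, q}"
    using eq_pair_if_card_2[OF \<open>degree E p = 2\<close> \<open>x \<in> neighbors E p\<close> q(1)] q(2) by simp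
  have "p \<in> neighbors E q" "q \<in> V"
    using q(1) in_neighbors_sym[of q E p] neighbors_subset[OF sg, of p] by auto
  show thesis
  proof (cases "2 \<le> degree E q")
    case True
    then have "detachable E p x" using \<open>degree E p = 2\<close> Np by (auto simp: detachable_def)
    then show thesis using leaf x(1) p by blast
  next
    case False
    then have "degree E q \<le> 1" by simp
    then have "neighbors E q = {p}"
      using \<open>p \<in> neighbors E q\<close> finite_neighbors[OF sg] by (simp add: eq_singleton_if_card_le_1)
    then show thesis using P3 x(1) \<open>q \<in> V\<close> q(2) p Np by metis
  qed
qed

lemma reducible_if_not_in_K1_K2:
  assumes sg: "simple_graph V E" and free: "\<forall>x\<in>V. not_in_K1_K2 E x" and "V \<noteq> {}"
  obtains (edge) u v where "{u, v} \<in> E" "u \<noteq> v" "detachable E u v" "detachable E v u"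
    | (leaf) l p where "l \<in> V" "neighbors E l = {p}" "detachable E p l"
    | (P3) a b c where "a \<in> V" "b \<in> V" "a \<noteq> b"
      "neighbors E a = {c}" "neighbors E b = {c}" "neighbors E c = {a, b}"
proof -
  have deg_ge_1: "1 \<le> degree E z" if "z \<in> V" for z
    using degree_ge_1_if_not_in_K1_K2[OF sg] free that by blast
  consider (high) x where "x \<in> V" "3 \<le> degree E x"
    | (leaf') x where "x \<in> V" "degree E x = 1" "\<forall>z\<in>V. degree E z \<le> 2"
    | (cycle) "\<forall>z\<in>V. degree E z = 2"
    using deg_ge_1 by (metis le_antisym not_less_eq_eq numeral_2_eq_2 numeral_3_eq_3 One_nat_def)
  then show thesis
  proof cases
    case high
    then show thesis using reducible_at_high_degree[OF sg free] edge leaf by blast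
  next
    case leaf'
    then show thesis using reducible_at_leaf[OF sg free] leaf P3 by blast
  next
    case cycle
    obtain v where "v \<in> V" using \<open>V \<noteq> {}\<close> by blast
    moreover obtain u where "u \<in> neighbors E v"
      using free \<open>v \<in> V\<close> by (auto simp: not_in_K1_K2_def)
    moreover have "detachable E y z" if "y \<in> V" for y z
      using cycle that neighbors_subset[OF sg, of y] by (auto simp: detachable_def)
    ultimately show thesis
      using edge neighbors_subset[OF sg, of v] by (auto simp: in_neighbors_iff)
  qed
qed

lemma nonzero_irregular_exists:
  fixes V :: "'v set" and E :: "'v set set"
  assumes "simple_graph V E" "\<forall>v\<in>V. not_in_K1_K2 E v"
    and "infinite (UNIV :: 'a set) \<or> 2 * card V \<le> card (UNIV :: 'a set)"
  shows "\<exists>f :: 'v set \<Rightarrow> 'a::ab_group_add. nonzero_irregular V E f"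
  using assms
proof (induction "card V + card E" arbitrary: V E rule: less_induct)
  case less
  note sg = less.prems(1) and free = less.prems(2) and order = less.prems(3)
  have "finite V" using sg by (simp add: simple_graph_def)
  have "finite E" using finite_edges[OF sg] .
  have order_Diff: "infinite (UNIV :: 'a set) \<or> 2 * card (V - X) \<le> card (UNIV :: 'a set)" for X
  proof -
    have "card (V - X) \<le> card V" using \<open>finite V\<close> by (rule card_mono) blast
    then show ?thesis using order by auto
  qed
  show ?case
  proof (cases "V = {}")
    case True
    then have "E = {}" using sg by (auto simp: simple_graph_def)
    with True show ?thesis by (auto simp: nonzero_irregular_def)
  next
    case False
    show ?thesis
    proof (cases rule: reducible_if_not_in_K1_K2[OF sg free False, case_names edge leaf P3])
      case (edge u v)
      have "card V + card (E - {{u, v}}) < card V + card E"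
        using card_Diff1_less[OF \<open>finite E\<close> edge(1)] by simp
      then obtain f0 :: "'v set \<Rightarrow> 'a" where "nonzero_irregular V (E - {{u, v}}) f0"
        using less.hyps[OF _ simple_graph_subset[OF sg Diff_subset]
            not_in_K1_K2_remove_edge[OF sg edge(1,2) free edge(3,4)] order] by blast
      then show ?thesis using nonzero_irregular_insert_edge[OF sg edge(1,2) _ order] by blast
    next
      case (leaf l p)
      have "card (V - {l}) < card V" using card_Diff1_less[OF \<open>finite V\<close> leaf(1)] .
      moreover have "card (E - {{l, p}}) \<le> card E" using \<open>finite E\<close> by (simp add: card_mono)
      ultimately have "card (V - {l}) + card (E - {{l, p}}) < card V + card E" by linarith
      then obtain f0 :: "'v set \<Rightarrow> 'a" where "nonzero_irregular (V - {l}) (E - {{l, p}}) f0"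
        using less.hyps[OF _ not_in_K1_K2_remove_leaf[OF sg leaf(2) free leaf(3)] order_Diff] by blast
      then show ?thesis using nonzero_irregular_insert_leaf[OF sg leaf(1,2) _ order] by blast
    next
      case (P3 a b c)
      have "card (V - {a, b, c}) < card V"
        using P3(1) \<open>finite V\<close> by (intro psubset_card_mono) auto
      moreover have "card (E - {{a, c}, {b, c}}) \<le> card E" using \<open>finite E\<close> by (simp add: card_mono)
      ultimately have "card (V - {a, b, c}) + card (E - {{a, c}, {b, c}}) < card V + card E"
        by linarith
      then obtain f0 :: "'v set \<Rightarrow> 'a"
        where "nonzero_irregular (V - {a, b, c}) (E - {{a, c}, {b, c}}) f0"
        using less.hyps[OF _ not_in_K1_K2_remove_P3[OF sg P3(4-6) free] order_Diff] by blast
      then show ?thesis using nonzero_irregular_insert_P3[OF sg P3 _ order] by blast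
    qed
  qed
qed

theorem theorem3:
  fixes V :: "'v set" and E :: "'v set set"
  assumes "simple_graph V E"
    and "\<forall>v\<in>V. card (component E v) \<ge> 3"
    and "infinite (UNIV :: 'a::ab_group_add set) \<or> 2 * card V \<le> card (UNIV :: 'a set)"
  shows "\<exists>f :: 'v set \<Rightarrow> 'a. (\<forall>e\<in>E. f e \<noteq> 0) \<and> inj_on (weight E f) V
           \<and> (\<forall>v\<in>V. weight E f v \<noteq> 0)"
proof -
  have "\<forall>v\<in>V. not_in_K1_K2 E v"
    using assms(2) not_in_K1_K2_if_card_component[OF assms(1)] by blast
  then show ?thesis
    using nonzero_irregular_exists[OF assms(1) _ assms(3)] by (simp add: nonzero_irregular_def)
qed

end
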